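(* Let $k\ge0$ and let $\lambda=(\lambda_1,\dots,\lambda_r)$ be a $k$-strict partition of length $r$ with characteristic index $\chi$. Let $r'$ be the smallest even integer $\ge r$. Then, as rational functions in $t_1,\dots,t_r$ over $\mathbb Z[\beta]$, \[ t_1^{\lambda_1}\cdots t_r^{\lambda_r}\frac{\prod_{1\le i<j\le r}(1-\bar t_i/\bar t_j)}{\prod_{(i,j)\in C(\lambda)_r}(1-t_i/\bar t_j)}=\sum_{I\subset D(\lambda)_r}\operatorname{Pf}\big(\Lambda^I_{i,j}(t)\big)_{1\le i<j\le r'}, \] where $\Lambda^I_{i,j}(t)=t_i^{\lambda_i+d_i^I}t_j^{\lambda_j+d_j^I}F^I_{i,j}(t)$ for $1\le i<j\le r$, and, when $r$ is odd (so $r'=r+1$), $\Lambda^I_{i,r+1}(t)=t_i^{\lambda_i+d_i^I}F^I_i(t)$ for $1\le i\le r$.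
   Context: A partition $\lambda=(\lambda_1\ge\lambda_2\ge\cdots\ge0)$ is $k$-strict if $\lambda_i>k$ implies $\lambda_i>\lambda_{i+1}$. Its characteristic index is $\chi_j=\#\{i:1\le i<j,\ \lambda_i+\lambda_j>2k+j-i\}+\lambda_j-k-j$ (for all $j\ge1$, with $\lambda_j=0$ for $j>r$); one has $\chi_i+\chi_j\ge0\iff\lambda_i+\lambda_j>2k+j-i$ for $i<j$. Set $\Delta_r=\{(i,j):1\le i<j\le r\}$, $C(\lambda)_r=\{(i,j)\in\Delta_r:\chi_i+\chi_j\ge0\}$, $D(\lambda)_r=\Delta_r\setminus C(\lambda)_r$. For $I\subset\Delta_r$: $a_i^I=\#\{j:(i,j)\in I\}$, $c_j^I=\#\{i:(i,j)\in I\}$, $d_i^I=a_i^I-c_i^I$. Notation: $\bar t=-t/(1+\beta t)$. Define \[ F^I_{i,j}(t)=\frac{1}{(1+\beta t_i)^{r'-i-c_i^I-1}}\frac{1}{(1+\beta t_j)^{r'-j-c_j^I}}\frac{1-\bar t_i/\bar t_j}{1-t_i/\bar t_j},\qquad F^I_i(t)=\frac{1}{(1+\beta t_i)^{r'-i-c_i^I-1}}. \] $\operatorname{Pf}$ is the Pfaffian of the skew-symmetric $r'\times r'$ matrix with the given entries above the diagonal. *)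

theory Defs
  imports Complex_Main
begin

text \<open>Partitions are encoded as functions lam :: nat => nat, indexed from 1,
  with lam i = 0 for i > r.\<close>

definition is_partition_of_length :: "(nat \<Rightarrow> nat) \<Rightarrow> nat \<Rightarrow> bool" where
  "is_partition_of_length lam r \<longleftrightarrow>
     (\<forall>i. 1 \<le> i \<longrightarrow> lam (Suc i) \<le> lam i) \<and>
     (\<forall>i. 1 \<le> i \<and> i \<le> r \<longrightarrow> 0 < lam i) \<and>
     (\<forall>i. r < i \<longrightarrow> lam i = 0)"

definition k_strict :: "nat \<Rightarrow> (nat \<Rightarrow> nat) \<Rightarrow> bool" where
  "k_strict k lam \<longleftrightarrow> (\<forall>i. 1 \<le> i \<longrightarrow> lam i > k \<longrightarrow> lam i > lam (Suc i))"

definition char_index :: "nat \<Rightarrow> (nat \<Rightarrow> nat) \<Rightarrow> nat \<Rightarrow> int" where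
  "char_index k lam j =
     int (card {i. 1 \<le> i \<and> i < j \<and> int (lam i) + int (lam j) > 2 * int k + int j - int i})
     + int (lam j) - int k - int j"

definition Delta :: "nat \<Rightarrow> (nat \<times> nat) set" where
  "Delta r = {(i, j). 1 \<le> i \<and> i < j \<and> j \<le> r}"

definition Cset :: "nat \<Rightarrow> (nat \<Rightarrow> nat) \<Rightarrow> nat \<Rightarrow> (nat \<times> nat) set" where
  "Cset k lam r = {(i, j) \<in> Delta r. char_index k lam i + char_index k lam j \<ge> 0}"

definition Dset :: "nat \<Rightarrow> (nat \<Rightarrow> nat) \<Rightarrow> nat \<Rightarrow> (nat \<times> nat) set" where
  "Dset k lam r = Delta r - Cset k lam r"

definition a_I :: "(nat \<times> nat) set \<Rightarrow> nat \<Rightarrow> nat" where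
  "a_I I i = card {j. (i, j) \<in> I}"

definition c_I :: "(nat \<times> nat) set \<Rightarrow> nat \<Rightarrow> nat" where
  "c_I I j = card {i. (i, j) \<in> I}"

definition d_I :: "(nat \<times> nat) set \<Rightarrow> nat \<Rightarrow> int" where
  "d_I I i = int (a_I I i) - int (c_I I i)"

definition tbar :: "'a::field \<Rightarrow> 'a \<Rightarrow> 'a" where
  "tbar \<beta> x = - x / (1 + \<beta> * x)"

definition rprime :: "nat \<Rightarrow> nat" where
  "rprime r = (if even r then r else r + 1)"

definition F2 :: "'a::field \<Rightarrow> (nat \<Rightarrow> 'a) \<Rightarrow> nat \<Rightarrow> (nat \<times> nat) set \<Rightarrow> nat \<Rightarrow> nat \<Rightarrow> 'a" where
  "F2 \<beta> t r I i j =
     1 / ((1 + \<beta> * t i) powi (int (rprime r) - int i - int (c_I I i) - 1))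
     * (1 / ((1 + \<beta> * t j) powi (int (rprime r) - int j - int (c_I I j))))
     * ((1 - tbar \<beta> (t i) / tbar \<beta> (t j)) / (1 - t i / tbar \<beta> (t j)))"

definition F1 :: "'a::field \<Rightarrow> (nat \<Rightarrow> 'a) \<Rightarrow> nat \<Rightarrow> (nat \<times> nat) set \<Rightarrow> nat \<Rightarrow> 'a" where
  "F1 \<beta> t r I i =
     1 / ((1 + \<beta> * t i) powi (int (rprime r) - int i - int (c_I I i) - 1))"

definition LambdaI :: "'a::field \<Rightarrow> (nat \<Rightarrow> 'a) \<Rightarrow> (nat \<Rightarrow> nat) \<Rightarrow> nat \<Rightarrow> (nat \<times> nat) set
    \<Rightarrow> nat \<Rightarrow> nat \<Rightarrow> 'a" where
  "LambdaI \<beta> t lam r I i j =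
     (if j \<le> r then
        t i powi (int (lam i) + d_I I i) * t j powi (int (lam j) + d_I I j) * F2 \<beta> t r I i j
      else t i powi (int (lam i) + d_I I i) * F1 \<beta> t r I i)"

text \<open>Pfaffian of the skew-symmetric matrix on the index list xs (increasing),
  whose above-diagonal entries are A i j; expansion along the first row:
  Pf = sum_j (-1)^j a_{1j} Pf(A without rows/cols 1, j).\<close>
function pf :: "(nat \<Rightarrow> nat \<Rightarrow> 'a::comm_ring_1) \<Rightarrow> nat list \<Rightarrow> 'a" where
  "pf A [] = 1"
| "pf A (i # rest) =
     (\<Sum>k<length rest. (-1) ^ k * A i (rest ! k) * pf A (take k rest @ drop (Suc k) rest))"
  by pat_completeness auto
termination
  by (relation "measure (\<lambda>(A, xs). length xs)") auto

definition pfaffian :: "nat \<Rightarrow> (nat \<Rightarrow> nat \<Rightarrow> 'a::comm_ring_1) \<Rightarrow> 'a" where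
  "pfaffian n A = pf A [1..<Suc n]"

end

theory Submission
  imports Defs "HOL-Computational_Algebra.Polynomial"
begin

text \<open>Write \<open>t \<oplus> s = t + s + \<beta> t s\<close>.  Each factor of the left-hand side splits as
  \<open>1 - tbar t\<^sub>i / tbar t\<^sub>j = (1 - t\<^sub>i / tbar t\<^sub>j) (t\<^sub>j - t\<^sub>i) / ((t\<^sub>i \<oplus> t\<^sub>j) (1 + \<beta> t\<^sub>i))\<close>,
  the factors \<open>1 - t\<^sub>i / tbar t\<^sub>j = 1 + t\<^sub>i (1 + \<beta> t\<^sub>j) / t\<^sub>j\<close> over \<open>C(\<lambda>)\<^sub>r\<close> cancel, and those
  over \<open>D(\<lambda>)\<^sub>r\<close> expand into a sum over subsets \<open>I\<close>.  Every summand is a diagonal rescaling of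
  the Schur-type Pfaffian \<open>Pf((t\<^sub>j - t\<^sub>i) / (t\<^sub>i \<oplus> t\<^sub>j))\<close>, bordered for odd \<open>r\<close> by the column
  \<open>1 + \<beta> t\<^sub>i\<close>, and that Pfaffian equals the product of its entries.  The latter identity is
  proved for arbitrary projective points by expanding along the first row: the minors are
  products by induction, and the resulting sum is a partial fraction expansion, which holds
  because a polynomial of small degree vanishes at too many points.\<close>

section \<open>Pfaffians indexed by finite sets\<close>

definition pf_set :: "(nat \<Rightarrow> nat \<Rightarrow> 'a::comm_ring_1) \<Rightarrow> nat set \<Rightarrow> 'a" where
  "pf_set A S = pf A (sorted_list_of_set S)"

lemma pfaffian_eq_pf_set: "pfaffian n A = pf_set A {1..n}"
  unfolding pfaffian_def pf_set_def
  by (metis atLeastLessThanSuc_atLeastAtMost sorted_list_of_set_range)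

lemma pf_set_empty [simp]: "pf_set A {} = 1"
  by (simp add: pf_set_def)

lemma take_append_drop_Suc_eq_remove1:
  assumes "distinct xs" "k < length xs"
  shows "take k xs @ drop (Suc k) xs = remove1 (xs ! k) xs"
proof -
  have xs: "xs = take k xs @ xs ! k # drop (Suc k) xs"
    using assms(2) by (simp add: id_take_nth_drop)
  then have "xs ! k \<notin> set (take k xs)"
    using assms(1) by (metis distinct_append not_distinct_conv_prefix)
  then show ?thesis
    by (subst (2) xs) (simp add: remove1_append)
qed

lemma card_less_nth_sorted:
  fixes xs :: "nat list"
  assumes "sorted_wrt (<) xs" "k < length xs"
  shows "card {j \<in> set xs. j < xs ! k} = k"
proof -
  have "{j \<in> set xs. j < xs ! k} = set (take k xs)"
  proof safe
    fix j assume "j \<in> set xs" "j < xs ! k"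
    then obtain i where "i < length xs" "j = xs ! i" "xs ! i < xs ! k"
      by (auto simp: in_set_conv_nth)
    moreover have "xs ! k \<le> xs ! i" if "k \<le> i" "i < length xs"
      using that assms sorted_nth_mono strict_sorted_iff by blast
    ultimately show "j \<in> set (take k xs)"
      by (metis in_set_conv_nth length_take min_less_iff_conj not_le nth_take)
  next
    fix j assume "j \<in> set (take k xs)"
    then obtain i where "i < k" "j = xs ! i"
      using assms(2) by (auto simp: in_set_conv_nth)
    then show "j \<in> set xs" "j < xs ! k"
      using assms by (auto simp: sorted_wrt_iff_nth_less)
  qed
  moreover have "distinct (take k xs)"
    using assms(1) strict_sorted_iff distinct_take by blast
  ultimately show ?thesis
    using assms(2) by (simp add: distinct_card)
qed

lemma pf_set_expand_Min:
  assumes "finite S" "S \<noteq> {}"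
  defines "m \<equiv> Min S"
  shows "pf_set A S =
    (\<Sum>y\<in>S - {m}. (-1) ^ card {j \<in> S - {m}. j < y} * A m y * pf_set A (S - {m} - {y}))"
proof -
  define R where "R = sorted_list_of_set (S - {m})"
  have R: "sorted_wrt (<) R" "distinct R" "set R = S - {m}"
    using assms(1) by (auto simp: R_def)
  have "pf_set A S = (\<Sum>k<length R. (-1) ^ k * A m (R ! k) * pf A (take k R @ drop (Suc k) R))"
    using sorted_list_of_set_nonempty[OF assms(1,2)] by (simp add: pf_set_def R_def m_def)
  also have "\<dots> = (\<Sum>k<length R. (-1) ^ card {j \<in> S - {m}. j < R ! k} * A m (R ! k)
                     * pf_set A (S - {m} - {R ! k}))"
  proof (rule sum.cong[OF refl])
    fix k assume k: "k \<in> {..<length R}"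
    have "take k R @ drop (Suc k) R = sorted_list_of_set (S - {m} - {R ! k})"
      using k R assms(1)
      by (simp add: take_append_drop_Suc_eq_remove1 sorted_list_of_set_remove R_def)
    moreover have "card {j \<in> S - {m}. j < R ! k} = k"
      using card_less_nth_sorted[of R k] R k by simp
    ultimately show "(-1) ^ k * A m (R ! k) * pf A (take k R @ drop (Suc k) R) =
        (-1) ^ card {j \<in> S - {m}. j < R ! k} * A m (R ! k) * pf_set A (S - {m} - {R ! k})"
      by (simp add: pf_set_def)
  qed
  also have "\<dots> = (\<Sum>y\<in>S - {m}. (-1) ^ card {j \<in> S - {m}. j < y} * A m y * pf_set A (S - {m} - {y}))"
    using bij_betw_nth[OF R(2) refl R(3)[symmetric]]
    by (rule sum.reindex_bij_betw)
  finally show ?thesis .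
qed

lemma pf_set_cong:
  assumes "finite S" "\<And>i j. i \<in> S \<Longrightarrow> j \<in> S \<Longrightarrow> i < j \<Longrightarrow> A i j = B i j"
  shows "pf_set A S = pf_set B S"
  using assms
proof (induction S rule: finite_psubset_induct)
  case (psubset S)
  show ?case
  proof (cases "S = {}")
    case False
    define m where "m = Min S"
    have m: "m \<in> S" "\<And>y. y \<in> S - {m} \<Longrightarrow> m < y"
      using psubset.hyps False by (auto simp: m_def less_le)
    have "pf_set A (S - {m} - {y}) = pf_set B (S - {m} - {y})" if "y \<in> S - {m}" for y
      using psubset that m by (intro psubset.IH) auto
    then show ?thesis
      using psubset m unfolding pf_set_expand_Min[OF psubset.hyps False] m_def[symmetric]
      by (intro sum.cong) auto
  qed simp
qed

lemma pf_set_scale: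
  assumes "finite S"
  shows "pf_set (\<lambda>i j. s i * s j * A i j) S = (\<Prod>i\<in>S. s i) * pf_set A S"
  using assms
proof (induction S rule: finite_psubset_induct)
  case (psubset S)
  show ?case
  proof (cases "S = {}")
    case False
    define m where "m = Min S"
    have m: "m \<in> S" using psubset.hyps False by (simp add: m_def)
    have "(-1) ^ card {j \<in> S - {m}. j < y} * (s m * s y * A m y)
            * pf_set (\<lambda>i j. s i * s j * A i j) (S - {m} - {y})
          = (\<Prod>i\<in>S. s i) * ((-1) ^ card {j \<in> S - {m}. j < y} * A m y * pf_set A (S - {m} - {y}))"
      if y: "y \<in> S - {m}" for y
    proof -
      have "(\<Prod>i\<in>S. s i) = s m * (s y * (\<Prod>i\<in>S - {m} - {y}. s i))"
        using psubset.hyps m y by (simp add: prod.remove)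
      moreover have "pf_set (\<lambda>i j. s i * s j * A i j) (S - {m} - {y})
                     = (\<Prod>i\<in>S - {m} - {y}. s i) * pf_set A (S - {m} - {y})"
        using psubset m y by (intro psubset.IH) auto
      ultimately show ?thesis by (simp add: algebra_simps)
    qed
    then show ?thesis
      unfolding pf_set_expand_Min[OF psubset.hyps False] m_def[symmetric]
      by (simp add: sum_distrib_left)
  qed simp
qed

definition prod_pairs :: "(nat \<Rightarrow> nat \<Rightarrow> 'a::comm_monoid_mult) \<Rightarrow> nat set \<Rightarrow> 'a" where
  "prod_pairs A S = (\<Prod>(i, j)\<in>{(i, j). i \<in> S \<and> j \<in> S \<and> i < j}. A i j)"

lemma finite_ordered_pairs: "finite S \<Longrightarrow> finite {(i, j). i \<in> S \<and> j \<in> S \<and> i < (j::nat)}"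
  by (rule finite_subset[of _ "S \<times> S"]) auto

lemma prod_pairs_empty [simp]: "prod_pairs A {} = 1"
  by (simp add: prod_pairs_def)

lemma prod_pairs_eq_0:
  fixes A :: "nat \<Rightarrow> nat \<Rightarrow> 'a::comm_semiring_1"
  assumes "finite S" "a \<in> S" "b \<in> S" "a < b" "A a b = 0"
  shows "prod_pairs A S = 0"
  unfolding prod_pairs_def
proof (rule prod_zero[where f = "case_prod A"])
  show "\<exists>x\<in>{(i, j). i \<in> S \<and> j \<in> S \<and> i < j}. case_prod A x = 0"
    using assms by (intro bexI[of _ "(a, b)"]) auto
qed (rule finite_ordered_pairs[OF assms(1)])

lemma prod_pairs_remove:
  fixes A :: "nat \<Rightarrow> nat \<Rightarrow> 'a::comm_ring_1"
  assumes "finite S" "y \<in> S" and skew: "\<And>i j. A j i = - A i j"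
  shows "prod_pairs A S = (-1) ^ card {j \<in> S. j < y} * (\<Prod>j\<in>S - {y}. A y j) * prod_pairs A (S - {y})"
proof -
  let ?L = "{j \<in> S. j < y}" and ?U = "{j \<in> S. y < j}"
  have pairs: "{(i, j). i \<in> S \<and> j \<in> S \<and> i < j} =
      (\<lambda>j. (j, y)) ` ?L \<union> (\<lambda>j. (y, j)) ` ?U \<union> {(i, j). i \<in> S - {y} \<and> j \<in> S - {y} \<and> i < j}"
    using assms(2) by auto
  have "prod_pairs A S = (\<Prod>j\<in>?L. A j y) * (\<Prod>j\<in>?U. A y j) * prod_pairs A (S - {y})"
    unfolding prod_pairs_def pairs using assms(1) finite_ordered_pairs[of "S - {y}"]
    by (subst prod.union_disjoint; auto simp: prod.union_disjoint prod.reindex inj_on_def)+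
  moreover have "(\<Prod>j\<in>?L. A j y) = (-1) ^ card ?L * (\<Prod>j\<in>?L. A y j)"
    by (simp add: skew[of y] prod_uminus)
  moreover have "(\<Prod>j\<in>S - {y}. A y j) = (\<Prod>j\<in>?L. A y j) * (\<Prod>j\<in>?U. A y j)"
    using assms(1) by (subst prod.union_disjoint[symmetric]) (auto intro: prod.cong)
  ultimately show ?thesis by (simp add: algebra_simps)
qed

lemma prod_pairs_remove_Min:
  fixes A :: "nat \<Rightarrow> nat \<Rightarrow> 'a::comm_ring_1"
  assumes "finite S" "m \<in> S" "\<And>y. y \<in> S \<Longrightarrow> m \<le> y" and skew: "\<And>i j. A j i = - A i j"
  shows "prod_pairs A S = (\<Prod>j\<in>S - {m}. A m j) * prod_pairs A (S - {m})"
proof -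
  have none_below: "{j \<in> S. j < m} = {}"
    using assms(3) by (auto simp: not_less[symmetric])
  show ?thesis
    using prod_pairs_remove[where A = A, OF assms(1,2) skew] by (simp add: none_below)
qed

lemma prod_pairs_remove_Max:
  fixes A :: "nat \<Rightarrow> nat \<Rightarrow> 'a::comm_ring_1"
  assumes "finite S" "m \<in> S" "\<And>y. y \<in> S \<Longrightarrow> y \<le> m" and skew: "\<And>i j. A j i = - A i j"
  shows "prod_pairs A S = (\<Prod>j\<in>S - {m}. A j m) * prod_pairs A (S - {m})"
proof -
  have "{j \<in> S. j < m} = S - {m}"
    using assms(3) by force
  moreover have "(\<Prod>j\<in>S - {m}. A m j) = (-1) ^ card (S - {m}) * (\<Prod>j\<in>S - {m}. A j m)"
    by (simp add: skew[of _ m] prod_uminus)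
  ultimately show ?thesis
    using prod_pairs_remove[where A = A, OF assms(1,2) skew]
    by (simp flip: power_add mult_2 add: power_mult)
qed

section \<open>Schur's Pfaffian for projective points\<close>

text \<open>Index \<open>k\<close> stands for the projective point \<open>(p k : q k)\<close>, i.e. \<open>x\<^sub>k = p k / q k\<close>.
  In these coordinates \<open>entry k l\<close> is \<open>(x\<^sub>l - x\<^sub>k) / (x\<^sub>k + x\<^sub>l + \<beta> x\<^sub>k x\<^sub>l)\<close>, and
  \<open>entry_at x\<close> is the row of \<open>entry\<close> belonging to the affine point \<open>(x : 1)\<close>.
  The homogeneous form lets the point \<open>(-1 : \<beta>)\<close>, at infinity when \<open>\<beta> = 0\<close>, border
  a Schur matrix of odd size.\<close>

locale projective_points =
  fixes \<beta> :: "'a::field_char_0" and p q :: "nat \<Rightarrow> 'a"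
begin

definition w :: "nat \<Rightarrow> 'a" where
  "w k = q k + \<beta> * p k"

definition den :: "nat \<Rightarrow> nat \<Rightarrow> 'a" where
  "den k l = p k * q l + p l * q k + \<beta> * p k * p l"

definition entry :: "nat \<Rightarrow> nat \<Rightarrow> 'a" where
  "entry k l = (p l * q k - p k * q l) / den k l"

definition entry_at :: "'a \<Rightarrow> nat \<Rightarrow> 'a" where
  "entry_at x k = (p k - x * q k) / (p k + x * w k)"

definition pf_coeff :: "nat set \<Rightarrow> nat \<Rightarrow> 'a" where
  "pf_coeff R k = (\<Prod>j\<in>R - {k}. inverse (entry k j))"

text \<open>All points but at most one, \<open>\<xi>\<close>, are affine and different from \<open>(-1 : \<beta>)\<close>.\<close>

definition admissible :: "nat set \<Rightarrow> bool" where
  "admissible R \<longleftrightarrow> finite R \<and> (\<forall>k\<in>R. p k \<noteq> 0) \<and> (\<forall>k\<in>R. \<forall>l\<in>R. k \<noteq> l \<longrightarrow> den k l \<noteq> 0)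
     \<and> (\<exists>\<xi>. \<forall>k\<in>R - {\<xi>}. q k \<noteq> 0 \<and> w k \<noteq> 0)"

definition distinct_points :: "nat set \<Rightarrow> bool" where
  "distinct_points R \<longleftrightarrow> (\<forall>k\<in>R. \<forall>l\<in>R. k \<noteq> l \<longrightarrow> p l * q k \<noteq> p k * q l)"

lemma admissible_subset: "admissible R \<Longrightarrow> S \<subseteq> R \<Longrightarrow> admissible S"
  unfolding admissible_def by (meson Diff_mono finite_subset subset_iff subset_refl)

lemma distinct_points_subset: "distinct_points R \<Longrightarrow> S \<subseteq> R \<Longrightarrow> distinct_points S"
  unfolding distinct_points_def by blast

lemma den_commute: "den l k = den k l"
  unfolding den_def by (simp add: algebra_simps)

lemma entry_skew: "entry l k = - entry k l"
  unfolding entry_def den_commute[of l k] by (simp add: minus_divide_left algebra_simps)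

lemma entry_nonzero:
  assumes "admissible R" "distinct_points R" "k \<in> R" "l \<in> R" "k \<noteq> l"
  shows "entry k l \<noteq> 0"
  using assms unfolding admissible_def distinct_points_def entry_def by auto

lemma entry_eq_entry_at: "q m = 1 \<Longrightarrow> entry m k = entry_at (p m) k"
  unfolding entry_def den_def entry_at_def w_def by (simp add: algebra_simps)

lemma entry_at_0: "p k \<noteq> 0 \<Longrightarrow> entry_at 0 k = 1"
  unfolding entry_at_def by simp

lemma entry_at_zero: "q k \<noteq> 0 \<Longrightarrow> entry_at (p k / q k) k = 0"
  unfolding entry_at_def by simp

lemma entry_at_zero_eq_entry:
  assumes "q k \<noteq> 0" "den k l \<noteq> 0"
  shows "entry_at (p k / q k) l = entry k l"
proof -
  have "p l + p k / q k * w l = den k l / q k" "p l - p k / q k * q l = (p l * q k - p k * q l) / q k"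
    using assms(1) unfolding w_def den_def by (simp_all add: field_simps)
  then show ?thesis
    using assms unfolding entry_at_def entry_def by simp
qed

lemma pole_numerator_eq:
  assumes "w k \<noteq> 0" "den k j \<noteq> 0"
  defines "z \<equiv> - p k / w k"
  shows "p j + z * w j = entry k j * (p j - z * q j)"
proof -
  have "p j + z * w j = (p j * q k - p k * q j) / w k" "p j - z * q j = den k j / w k"
    using assms(1) unfolding z_def w_def den_def by (simp_all add: field_simps)
  then show ?thesis
    using assms unfolding entry_def by simp
qed

lemma entry_at_two_points:
  assumes "p l * q k \<noteq> p k * q l" "den k l \<noteq> 0" "p k + x * w k \<noteq> 0" "p l + x * w l \<noteq> 0"
  shows "entry_at x k * inverse (entry k l) + entry_at x l * inverse (entry l k)
         = entry_at x k * entry_at x l - 1"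
proof -
  define Z where "Z i = p i - x * q i" for i
  define L where "L i = p i + x * w i" for i
  define n where "n = p l * q k - p k * q l"
  have nz: "n \<noteq> 0" "L k \<noteq> 0" "L l \<noteq> 0"
    using assms unfolding n_def L_def by auto
  have key: "(Z k * L l - Z l * L k) * den k l = (Z k * Z l - L k * L l) * n"
    unfolding Z_def L_def n_def den_def w_def by algebra
  have "entry_at x k * inverse (entry k l) + entry_at x l * inverse (entry l k)
        = (Z k / L k - Z l / L l) * (den k l / n)"
    unfolding entry_skew[of l k] unfolding entry_at_def entry_def Z_def L_def n_def
    by (simp add: algebra_simps)
  also have "\<dots> = (Z k * L l - Z l * L k) * den k l / (L k * L l * n)"
    using nz by (simp add: field_simps)
  also have "\<dots> = Z k / L k * (Z l / L l) - 1"
    unfolding key using nz by (simp add: field_simps)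
  finally show ?thesis
    unfolding entry_at_def Z_def L_def .
qed

text \<open>The identity \<open>\<Sum>\<^sub>k pf_coeff R k \<cdot> entry_at x k = \<Prod>\<^sub>k entry_at x k - [card R even]\<close>,
  cleared of the denominators \<open>p k + x w k\<close>.\<close>

definition pf_poly :: "nat set \<Rightarrow> 'a poly" where
  "pf_poly R = (\<Sum>k\<in>R. smult (pf_coeff R k) ([:p k, - q k:] * (\<Prod>j\<in>R - {k}. [:p j, w j:])))
     - (\<Prod>k\<in>R. [:p k, - q k:]) + smult (of_bool (even (card R))) (\<Prod>k\<in>R. [:p k, w k:])"

lemma poly_pf_poly:
  "poly (pf_poly R) x =
     (\<Sum>k\<in>R. pf_coeff R k * ((p k - x * q k) * (\<Prod>j\<in>R - {k}. p j + x * w j)))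
     - (\<Prod>k\<in>R. p k - x * q k) + of_bool (even (card R)) * (\<Prod>k\<in>R. p k + x * w k)"
  by (simp add: pf_poly_def poly_sum poly_prod algebra_simps)

lemma poly_pf_poly_eq:
  assumes "finite R" "\<forall>k\<in>R. p k + x * w k \<noteq> 0"
  shows "poly (pf_poly R) x =
    ((\<Sum>k\<in>R. pf_coeff R k * entry_at x k) - (\<Prod>k\<in>R. entry_at x k) + of_bool (even (card R)))
      * (\<Prod>k\<in>R. p k + x * w k)"
proof -
  have "pf_coeff R k * entry_at x k * (\<Prod>j\<in>R. p j + x * w j)
        = pf_coeff R k * ((p k - x * q k) * (\<Prod>j\<in>R - {k}. p j + x * w j))" if "k \<in> R" for k
    using that assms by (simp add: prod.remove entry_at_def)
  then have "(\<Sum>k\<in>R. pf_coeff R k * entry_at x k) * (\<Prod>k\<in>R. p k + x * w k)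
      = (\<Sum>k\<in>R. pf_coeff R k * ((p k - x * q k) * (\<Prod>j\<in>R - {k}. p j + x * w j)))"
    unfolding sum_distrib_right by (rule sum.cong[OF refl])
  moreover have "(\<Prod>k\<in>R. entry_at x k) * (\<Prod>k\<in>R. p k + x * w k) = (\<Prod>k\<in>R. p k - x * q k)"
    using assms(2) by (simp add: entry_at_def flip: prod.distrib)
  ultimately show ?thesis
    unfolding poly_pf_poly by (simp only: ring_distribs)
qed

lemma degree_pf_poly:
  assumes "finite R"
  shows "degree (pf_poly R) \<le> card {k\<in>R. q k \<noteq> 0 \<or> w k \<noteq> 0}"
proof -
  define d where "d k = (of_bool (q k \<noteq> 0 \<or> w k \<noteq> 0) :: nat)" for k
  have prod_le: "degree (\<Prod>j\<in>A. [:p j, c j:]) \<le> sum d A"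
    if "finite A" "\<And>j. c j \<noteq> 0 \<Longrightarrow> q j \<noteq> 0 \<or> w j \<noteq> 0" for A c
    using that by (intro order_trans[OF degree_prod_sum_le] sum_mono) (auto simp: d_def)
  have "degree (smult (pf_coeff R k) ([:p k, - q k:] * (\<Prod>j\<in>R - {k}. [:p j, w j:]))) \<le> sum d R"
    if "k \<in> R" for k
  proof -
    have "degree ([:p k, - q k:] * (\<Prod>j\<in>R - {k}. [:p j, w j:])) \<le> d k + sum d (R - {k})"
      using assms prod_le[of "R - {k}" w]
      by (intro order_trans[OF degree_mult_le] add_mono) (auto simp: d_def)
    then show ?thesis
      using that assms by (simp add: sum.remove)
  qed
  moreover have "degree (\<Prod>k\<in>R. [:p k, - q k:]) \<le> sum d R"
    using assms by (intro prod_le) auto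
  moreover have "degree (smult (of_bool (even (card R))) (\<Prod>k\<in>R. [:p k, w k:])) \<le> sum d R"
    using assms by (intro order_trans[OF degree_smult_le] prod_le) auto
  ultimately have "degree (pf_poly R) \<le> sum d R"
    unfolding pf_poly_def using assms by (intro degree_add_le degree_diff_le degree_sum_le)
  also have "sum d R = card {k\<in>R. q k \<noteq> 0 \<or> w k \<noteq> 0}"
    using sum.inter_filter[OF assms, of "\<lambda>_. 1::nat" "\<lambda>k. q k \<noteq> 0 \<or> w k \<noteq> 0"]
    by (simp add: d_def of_bool_def)
  finally show ?thesis .
qed

lemma poly_pf_poly_pole:
  assumes "admissible R" "distinct_points R" "k \<in> R" "w k \<noteq> 0"
  shows "poly (pf_poly R) (- p k / w k) = 0"
proof -
  define z where "z = - p k / w k"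
  have fin: "finite R" using assms(1) by (simp add: admissible_def)
  have pole: "p k + z * w k = 0" unfolding z_def using assms(4) by simp
  have "(\<Prod>j\<in>R - {l}. p j + z * w j) = 0" if "l \<in> R - {k}" for l
    using that assms(3) fin pole by (intro prod_zero) auto
  then have "(\<Sum>l\<in>R - {k}. pf_coeff R l * ((p l - z * q l) * (\<Prod>j\<in>R - {l}. p j + z * w j))) = 0"
    by (intro sum.neutral) simp
  then have "(\<Sum>l\<in>R. pf_coeff R l * ((p l - z * q l) * (\<Prod>j\<in>R - {l}. p j + z * w j)))
        = pf_coeff R k * ((p k - z * q k) * (\<Prod>j\<in>R - {k}. p j + z * w j))"
    using assms(3) fin by (simp add: sum.remove)
  also have "pf_coeff R k * (\<Prod>j\<in>R - {k}. p j + z * w j) = (\<Prod>j\<in>R - {k}. p j - z * q j)"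
    unfolding pf_coeff_def prod.distrib[symmetric]
  proof (rule prod.cong[OF refl])
    fix j assume j: "j \<in> R - {k}"
    then have "entry k j \<noteq> 0" and den: "den k j \<noteq> 0"
      using assms entry_nonzero[of R k j] by (auto simp: admissible_def)
    moreover have "p j + z * w j = entry k j * (p j - z * q j)"
      unfolding z_def by (rule pole_numerator_eq[OF assms(4) den])
    ultimately show "inverse (entry k j) * (p j + z * w j) = p j - z * q j"
      by simp
  qed
  moreover have "(\<Prod>j\<in>R. p j + z * w j) = 0"
    using assms(3) fin pole by (intro prod_zero) auto
  ultimately show ?thesis
    unfolding poly_pf_poly z_def[symmetric] using assms(3) fin
    by (simp add: prod.remove algebra_simps)
qed

lemma poly_pf_poly_zero_not_pole:
  assumes "admissible R" "distinct_points R" "k \<in> R" "q k \<noteq> 0"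
    and no_pole: "\<forall>j\<in>R. p j + p k / q k * w j \<noteq> 0"
    and smaller: "(\<Sum>l\<in>R - {k}. pf_coeff (R - {k}) l) = 1 - of_bool (even (card (R - {k})))"
  shows "poly (pf_poly R) (p k / q k) = 0"
proof -
  define z where "z = p k / q k"
  have fin: "finite R" using assms(1) by (simp add: admissible_def)
  have "entry_at z l * pf_coeff R l = - pf_coeff (R - {k}) l" if l: "l \<in> R - {k}" for l
  proof -
    have "entry k l \<noteq> 0" and den: "den k l \<noteq> 0"
      using assms l entry_nonzero[of R k l] by (auto simp: admissible_def)
    moreover have "entry_at z l = entry k l"
      unfolding z_def by (rule entry_at_zero_eq_entry[OF assms(4) den])
    moreover have "pf_coeff R l = inverse (entry l k) * pf_coeff (R - {k}) l"
      unfolding pf_coeff_def using fin assms(3) l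
      by (subst prod.remove[of _ k]) (auto simp: insert_Diff_if Diff_insert2 [symmetric] insert_commute)
    ultimately show ?thesis
      unfolding entry_skew[of l k] by simp
  qed
  then have "(\<Sum>l\<in>R. pf_coeff R l * entry_at z l) = - (\<Sum>l\<in>R - {k}. pf_coeff (R - {k}) l)"
    using fin assms(3,4) by (simp add: sum.remove z_def entry_at_zero mult.commute sum_negf)
  moreover have "(\<Prod>l\<in>R. entry_at z l) = 0"
    using fin assms(3,4) unfolding z_def by (intro prod_zero) (auto intro: entry_at_zero)
  moreover have "even (card R) \<longleftrightarrow> odd (card (R - {k}))"
    using fin assms(3) by (cases "card R") auto
  ultimately have "(\<Sum>l\<in>R. pf_coeff R l * entry_at z l) - (\<Prod>l\<in>R. entry_at z l)
      + of_bool (even (card R)) = 0"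
    unfolding smaller by (cases "even (card (R - {k}))") (simp_all add: algebra_simps)
  then show ?thesis
    unfolding poly_pf_poly_eq[OF fin no_pole] z_def by simp
qed

lemma poly_pf_poly_zero:
  assumes "admissible R" "distinct_points R" "k \<in> R" "q k \<noteq> 0"
    and smaller: "(\<Sum>l\<in>R - {k}. pf_coeff (R - {k}) l) = 1 - of_bool (even (card (R - {k})))"
  shows "poly (pf_poly R) (p k / q k) = 0"
proof (cases "\<forall>j\<in>R. p j + p k / q k * w j \<noteq> 0")
  case True
  then show ?thesis
    using poly_pf_poly_zero_not_pole[OF assms(1-4) _ smaller] by simp
next
  case False
  then obtain j where j: "j \<in> R" "p j + p k / q k * w j = 0" by blast
  moreover have "p j \<noteq> 0" using j(1) assms(1) by (simp add: admissible_def)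
  ultimately have "w j \<noteq> 0" by auto
  then have "p k / q k = - p j / w j"
    using j(2) by (simp add: field_simps add_eq_0_iff2)
  then show ?thesis
    using poly_pf_poly_pole[OF assms(1,2) j(1) \<open>w j \<noteq> 0\<close>] by simp
qed

lemma inj_on_zero_points: "distinct_points R \<Longrightarrow> inj_on (\<lambda>k. p k / q k) {k\<in>R. q k \<noteq> 0}"
  unfolding distinct_points_def inj_on_def by (auto simp: frac_eq_eq)

lemma inj_on_pole_points: "distinct_points R \<Longrightarrow> inj_on (\<lambda>k. - p k / w k) {k\<in>R. w k \<noteq> 0}"
  unfolding distinct_points_def inj_on_def w_def by (auto simp: frac_eq_eq algebra_simps)

text \<open>Zeros and poles of different factors never meet; those of one factor meet only at \<open>-2/\<beta>\<close>.\<close>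

lemma zero_point_eq_pole_point:
  assumes "admissible R" "k \<in> R" "l \<in> R" "q k \<noteq> 0" "w l \<noteq> 0" "p k / q k = - p l / w l"
  shows "p k / q k = - 2 / \<beta>"
proof -
  have e: "p k * w l = - p l * q k"
    using assms(4-6) by (simp add: field_simps)
  have "k = l"
  proof (rule ccontr)
    assume "k \<noteq> l"
    then have "den k l \<noteq> 0" using assms(1-3) by (simp add: admissible_def)
    moreover have "den k l = p k * w l + p l * q k" unfolding den_def w_def by (simp add: algebra_simps)
    ultimately show False using e by simp
  qed
  then have "p k * w k = p k * (- q k)"
    using e by simp
  moreover have "p k \<noteq> 0" using assms(1,2) by (simp add: admissible_def)
  ultimately have "w k = - q k"
    by (metis mult_left_cancel mult_minus_right)
  then have "\<beta> * p k + 2 * q k = 0"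
    unfolding w_def by (simp add: algebra_simps)
  then have "\<beta> * (p k / q k) = - 2"
    using assms(4) by (simp add: field_simps) (simp add: eq_neg_iff_add_eq_0)
  moreover from this have "\<beta> \<noteq> 0" by auto
  ultimately show ?thesis
    by (metis nonzero_mult_div_cancel_left)
qed

lemma card_nonconstant_less_card_zeros_poles:
  assumes adm: "admissible R" and "distinct_points R" "3 \<le> card R"
  shows "card {k\<in>R. q k \<noteq> 0 \<or> w k \<noteq> 0}
    < card ((\<lambda>k. p k / q k) ` {k\<in>R. q k \<noteq> 0} \<union> (\<lambda>k. - p k / w k) ` {k\<in>R. w k \<noteq> 0})"
proof -
  define Aq where "Aq = {k\<in>R. q k \<noteq> 0}"
  define Aw where "Aw = {k\<in>R. w k \<noteq> 0}"
  define Zq where "Zq = (\<lambda>k. p k / q k) ` Aq"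
  define Zw where "Zw = (\<lambda>k. - p k / w k) ` Aw"
  have fin: "finite R" "finite Aq" "finite Aw"
    using adm by (auto simp: admissible_def Aq_def Aw_def)
  obtain \<xi> where "\<forall>k\<in>R - {\<xi>}. q k \<noteq> 0 \<and> w k \<noteq> 0"
    using adm by (auto simp: admissible_def)
  then have "R - {\<xi>} \<subseteq> Aq \<inter> Aw" by (auto simp: Aq_def Aw_def)
  then have "card R - 1 \<le> card (Aq \<inter> Aw)"
    using fin by (metis card_Diff_singleton_if card_mono diff_le_self finite_Int order_trans)
  moreover have "card (Zq \<inter> Zw) \<le> 1"
  proof -
    have "Zq \<inter> Zw \<subseteq> {- 2 / \<beta>}"
      using zero_point_eq_pole_point[OF adm] by (auto simp: Zq_def Zw_def Aq_def Aw_def)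
    then have "card (Zq \<inter> Zw) \<le> card {- 2 / \<beta>}"
      by (rule card_mono[rotated]) simp
    then show ?thesis by simp
  qed
  moreover have "card Zq = card Aq" "card Zw = card Aw"
    unfolding Zq_def Zw_def Aq_def Aw_def
    using card_image inj_on_zero_points inj_on_pole_points assms(2) by blast+
  moreover have "card (Zq \<union> Zw) + card (Zq \<inter> Zw) = card Zq + card Zw"
    using fin card_Un_Int[of Zq Zw] by (simp add: Zq_def Zw_def)
  moreover have "card (Aq \<union> Aw) + card (Aq \<inter> Aw) = card Aq + card Aw"
    using fin card_Un_Int[of Aq Aw] by simp
  moreover have "card {k\<in>R. q k \<noteq> 0 \<or> w k \<noteq> 0} = card (Aq \<union> Aw)"
    by (rule arg_cong[where f = card]) (auto simp: Aq_def Aw_def)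
  ultimately show ?thesis
    using assms(3) unfolding Zq_def Zw_def Aq_def Aw_def by linarith
qed

lemma pf_poly_eq_0:
  assumes "admissible R" "distinct_points R" "3 \<le> card R"
    and zeros: "\<And>k. k \<in> R \<Longrightarrow> q k \<noteq> 0 \<Longrightarrow> poly (pf_poly R) (p k / q k) = 0"
    and poles: "\<And>k. k \<in> R \<Longrightarrow> w k \<noteq> 0 \<Longrightarrow> poly (pf_poly R) (- p k / w k) = 0"
  shows "pf_poly R = 0"
proof (rule ccontr)
  assume nz: "pf_poly R \<noteq> 0"
  let ?Z = "(\<lambda>k. p k / q k) ` {k\<in>R. q k \<noteq> 0} \<union> (\<lambda>k. - p k / w k) ` {k\<in>R. w k \<noteq> 0}"
  have "?Z \<subseteq> {z. poly (pf_poly R) z = 0}"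
    using zeros poles by auto
  then have "card ?Z \<le> degree (pf_poly R)"
    using poly_roots_finite[OF nz] card_poly_roots_bound[OF nz] by (meson card_mono order_trans)
  moreover have "finite R"
    using assms(1) by (simp add: admissible_def)
  ultimately show False
    using degree_pf_poly card_nonconstant_less_card_zeros_poles[OF assms(1-3)] by fastforce
qed

lemma sum_pf_coeff_entry_at_small:
  assumes "admissible R" "distinct_points R" "\<forall>k\<in>R. p k + x * w k \<noteq> 0" "card R \<le> 2"
  shows "(\<Sum>k\<in>R. pf_coeff R k * entry_at x k) = (\<Prod>k\<in>R. entry_at x k) - of_bool (even (card R))"
proof -
  have "finite R" using assms(1) by (simp add: admissible_def)
  have "card R = 0 \<or> card R = Suc 0 \<or> card R = 2"
    using assms(4) by linarith
  then consider "R = {}" | k where "R = {k}" | k l where "R = {k, l}" "k \<noteq> l"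
    unfolding card_1_singleton_iff card_2_iff using \<open>finite R\<close> by auto
  then show ?thesis
  proof cases
    case (3 k l)
    then have "p l * q k \<noteq> p k * q l" "den k l \<noteq> 0"
      using assms(1,2) by (auto simp: admissible_def distinct_points_def)
    then show ?thesis
      using entry_at_two_points[of l k x] assms(3) 3
      by (simp add: pf_coeff_def insert_Diff_if algebra_simps)
  qed (simp_all add: pf_coeff_def)
qed

lemma sum_pf_coeff_entry_at_if_pf_poly_eq_0:
  assumes "finite R" "\<forall>k\<in>R. p k + x * w k \<noteq> 0" "pf_poly R = 0"
  shows "(\<Sum>k\<in>R. pf_coeff R k * entry_at x k) = (\<Prod>k\<in>R. entry_at x k) - of_bool (even (card R))"
proof -
  have "((\<Sum>k\<in>R. pf_coeff R k * entry_at x k) - (\<Prod>k\<in>R. entry_at x k)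
      + of_bool (even (card R))) * (\<Prod>k\<in>R. p k + x * w k) = 0"
    using poly_pf_poly_eq[OF assms(1,2)] assms(3) by simp
  moreover have "(\<Prod>k\<in>R. p k + x * w k) \<noteq> 0"
    using assms(1,2) by simp
  ultimately have "(\<Sum>k\<in>R. pf_coeff R k * entry_at x k) - (\<Prod>k\<in>R. entry_at x k)
      + of_bool (even (card R)) = 0"
    by simp
  then show ?thesis
    by (simp only: diff_add_eq right_minus_eq eq_diff_eq)
qed

text \<open>For three or more points the cleared
  difference \<open>pf_poly R\<close> has more roots than its degree: every pole is a root directly, and
  every zero reduces to the expansion for one point fewer, evaluated at \<open>x = 0\<close>.\<close>

lemma sum_pf_coeff_entry_at:
  assumes "admissible R" "distinct_points R" "\<forall>k\<in>R. p k + x * w k \<noteq> 0"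
  shows "(\<Sum>k\<in>R. pf_coeff R k * entry_at x k) = (\<Prod>k\<in>R. entry_at x k) - of_bool (even (card R))"
proof -
  have "finite R" using assms(1) by (simp add: admissible_def)
  then show ?thesis
    using assms
  proof (induction R arbitrary: x rule: finite_psubset_induct)
    case (psubset R)
    show ?case
    proof (cases "card R \<le> 2")
      case False
      have smaller: "(\<Sum>l\<in>R - {k}. pf_coeff (R - {k}) l) = 1 - of_bool (even (card (R - {k})))"
        if "k \<in> R" for k
      proof -
        have "p l \<noteq> 0" if "l \<in> R" for l
          using that psubset.prems(1) by (simp add: admissible_def)
        moreover have "R - {k} \<subset> R" using that by auto
        ultimately show ?thesis
          using psubset.IH[of "R - {k}" 0] psubset.prems(1,2)
          by (auto simp: entry_at_0 admissible_subset distinct_points_subset)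
      qed
      have "pf_poly R = 0"
        using False pf_poly_eq_0[OF psubset.prems(1,2)] poly_pf_poly_zero[OF psubset.prems(1,2) _ _ smaller]
          poly_pf_poly_pole[OF psubset.prems(1,2)] by simp
      then show ?thesis
        by (rule sum_pf_coeff_entry_at_if_pf_poly_eq_0[OF psubset.hyps psubset.prems(3)])
    qed (use psubset.prems sum_pf_coeff_entry_at_small in blast)
  qed
qed

lemma entry_at_coincident:
  assumes "p b * q a = p a * q b" "p a + x * w a \<noteq> 0" "p b + x * w b \<noteq> 0"
  shows "entry_at x a = entry_at x b"
proof -
  have "(p a - x * q a) * (p b + x * w b) = (p b - x * q b) * (p a + x * w a)"
    using assms(1) unfolding w_def by algebra
  then show ?thesis
    unfolding entry_at_def using assms(2,3) by (simp add: frac_eq_eq)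
qed

lemma entry_coincident:
  assumes "p b * q a = p a * q b" "den a j \<noteq> 0" "den b j \<noteq> 0"
  shows "entry a j = entry b j"
proof -
  have "(p j * q a - p a * q j) * den b j = (p j * q b - p b * q j) * den a j"
    using assms(1) unfolding den_def by algebra
  then show ?thesis
    unfolding entry_def using assms(2,3) by (simp add: frac_eq_eq)
qed

text \<open>Two coincident points make all minors except two vanish, and those two cancel.\<close>

lemma sum_entry_at_prod_pairs_coincident:
  assumes adm: "admissible R" and no_pole: "\<forall>k\<in>R. p k + x * w k \<noteq> 0"
    and ab: "a \<in> R" "b \<in> R" "a < b" "p b * q a = p a * q b"
  shows "(\<Sum>y\<in>R. (-1) ^ card {j\<in>R. j < y} * entry_at x y * prod_pairs entry (R - {y})) = 0"
proof -
  have fin: "finite R" and den_nz: "\<forall>k\<in>R. \<forall>l\<in>R. k \<noteq> l \<longrightarrow> den k l \<noteq> 0"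
    using adm by (auto simp: admissible_def)
  have "entry a b = 0" unfolding entry_def using ab(4) by simp
  then have zero: "prod_pairs entry S = 0" if "S \<subseteq> R" "a \<in> S" "b \<in> S" for S
    using that fin ab(3) by (intro prod_pairs_eq_0[of S a b]) (auto intro: finite_subset)
  define f where "f y = (-1) ^ card {j\<in>R. j < y} * entry_at x y * prod_pairs entry (R - {y})" for y
  have "f y = 0" if "y \<in> R - {a, b}" for y
    unfolding f_def using that ab by (simp add: zero)
  then have "(\<Sum>y\<in>R. f y) = f a + f b"
    using fin ab by (simp add: sum.remove[of R a] sum.remove[of "R - {a}" b] sum.neutral Diff_insert2[symmetric])
  moreover have "f a + f b = 0"
  proof -
    have "prod_pairs entry (R - {a}) = (-1) ^ card {j\<in>R - {a}. j < b}
        * (\<Prod>j\<in>R - {a} - {b}. entry b j) * prod_pairs entry (R - {a} - {b})"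
      using prod_pairs_remove[OF _ _ entry_skew, of "R - {a}" b] fin ab by auto
    moreover have "prod_pairs entry (R - {b}) = (-1) ^ card {j\<in>R. j < a}
        * (\<Prod>j\<in>R - {a} - {b}. entry a j) * prod_pairs entry (R - {a} - {b})"
    proof -
      have "{j\<in>R - {b}. j < a} = {j\<in>R. j < a}" "R - {b} - {a} = R - {a} - {b}"
        using ab(3) by auto
      then show ?thesis
        using prod_pairs_remove[OF _ _ entry_skew, of "R - {b}" a] fin ab by auto
    qed
    moreover have "(\<Prod>j\<in>R - {a} - {b}. entry a j) = (\<Prod>j\<in>R - {a} - {b}. entry b j)"
      using ab den_nz by (intro prod.cong refl entry_coincident) auto
    moreover have "entry_at x a = entry_at x b"
      using ab no_pole by (intro entry_at_coincident) auto
    moreover have "card {j\<in>R. j < b} = Suc (card {j\<in>R - {a}. j < b})"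
    proof -
      have "{j\<in>R - {a}. j < b} = {j\<in>R. j < b} - {a}" "a \<in> {j\<in>R. j < b}"
        using ab by auto
      then show ?thesis
        using fin card_Suc_Diff1[of "{j\<in>R. j < b}" a] by simp
    qed
    ultimately show ?thesis
      unfolding f_def by (simp add: algebra_simps)
  qed
  ultimately show ?thesis
    unfolding f_def by simp
qed

lemma sum_entry_at_prod_pairs:
  assumes adm: "admissible R" and no_pole: "\<forall>k\<in>R. p k + x * w k \<noteq> 0"
  shows "(\<Sum>y\<in>R. (-1) ^ card {j\<in>R. j < y} * entry_at x y * prod_pairs entry (R - {y}))
         = ((\<Prod>k\<in>R. entry_at x k) - of_bool (even (card R))) * prod_pairs entry R"
proof (cases "distinct_points R")
  case True
  have fin: "finite R" using adm by (simp add: admissible_def)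
  have "(-1) ^ card {j\<in>R. j < y} * prod_pairs entry (R - {y}) = pf_coeff R y * prod_pairs entry R"
    if y: "y \<in> R" for y
  proof -
    have "pf_coeff R y * (\<Prod>j\<in>R - {y}. entry y j) = 1"
      unfolding pf_coeff_def prod.distrib[symmetric]
      using entry_nonzero[OF adm True y] by (intro prod.neutral) auto
    then show ?thesis
      unfolding prod_pairs_remove[OF fin y entry_skew]
      by (simp add: algebra_simps flip: power_add mult_2)
  qed
  then have "(\<Sum>y\<in>R. (-1) ^ card {j\<in>R. j < y} * entry_at x y * prod_pairs entry (R - {y}))
      = (\<Sum>y\<in>R. pf_coeff R y * entry_at x y) * prod_pairs entry R"
    unfolding sum_distrib_right by (intro sum.cong) (simp_all add: algebra_simps)
  then show ?thesis
    unfolding sum_pf_coeff_entry_at[OF adm True no_pole] .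
next
  case False
  then obtain a b where ab: "a \<in> R" "b \<in> R" "a < b" "p b * q a = p a * q b"
    unfolding distinct_points_def by (metis linorder_neqE_nat)
  moreover have "entry a b = 0"
    unfolding entry_def using ab(4) by simp
  ultimately have "prod_pairs entry R = 0"
    using adm by (intro prod_pairs_eq_0) (auto simp: admissible_def)
  then show ?thesis
    using sum_entry_at_prod_pairs_coincident[OF adm no_pole ab] by simp
qed

lemma affine_point_not_pole:
  assumes "admissible T" "q m = 1" "m \<in> T" "k \<in> T" "k \<noteq> m"
  shows "p k + p m * w k \<noteq> 0"
proof -
  have "p k + p m * w k = den m k"
    using assms(2) unfolding den_def w_def by (simp add: algebra_simps)
  then show ?thesis
    using assms unfolding admissible_def by auto
qed

text \<open>Schur's Pfaffian identity, by expansion along the first row: the row of an affine point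
  \<open>(x : 1)\<close> is \<open>entry_at x\<close>, so \<open>sum_entry_at_prod_pairs\<close> applies to the minors.\<close>

theorem pf_set_entry_eq_prod_pairs:
  assumes adm: "admissible T" and affine: "\<And>k l. k \<in> T \<Longrightarrow> l \<in> T \<Longrightarrow> k < l \<Longrightarrow> q k = 1"
    and "S \<subseteq> T" "even (card S)"
  shows "pf_set entry S = prod_pairs entry S"
proof -
  have "finite S" using assms(3) adm by (auto simp: admissible_def intro: finite_subset)
  then show ?thesis
    using assms(3,4)
  proof (induction S rule: finite_psubset_induct)
    case (psubset S)
    show ?case
    proof (cases "S = {}")
      case False
      define m where "m = Min S"
      define S' where "S' = S - {m}"
      have m: "m \<in> S" "\<And>y. y \<in> S' \<Longrightarrow> m < y"
        using psubset.hyps False by (auto simp: m_def S'_def less_le)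
      have card_S: "card S = Suc (card S')"
        using card_Suc_Diff1[OF psubset.hyps m(1)] by (simp add: S'_def)
      then have "S' \<noteq> {}"
        using psubset.prems(2) by auto
      then obtain l where "l \<in> S'"
        by blast
      then have q_m: "q m = 1"
        using affine m psubset.prems(1) by (auto simp: S'_def)
      have adm': "admissible S'"
        using adm psubset.prems(1) by (auto simp: S'_def intro: admissible_subset)
      have minors: "pf_set entry (S' - {y}) = prod_pairs entry (S' - {y})" if "y \<in> S'" for y
        using that card_S psubset.prems psubset.hyps
        by (intro psubset.IH) (auto simp: S'_def card_Diff_singleton)
      have no_pole: "\<forall>k\<in>S'. p k + p m * w k \<noteq> 0"
        using m(1) psubset.prems(1) affine_point_not_pole[OF adm q_m] unfolding S'_def by blast
      have "pf_set entry S
          = (\<Sum>y\<in>S'. (-1) ^ card {j\<in>S'. j < y} * entry_at (p m) y * prod_pairs entry (S' - {y}))"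
        unfolding pf_set_expand_Min[OF psubset.hyps False] m_def[symmetric] S'_def[symmetric]
        using minors by (simp add: entry_eq_entry_at[OF q_m])
      also have "\<dots> = (\<Prod>k\<in>S'. entry m k) * prod_pairs entry S'"
        using psubset.prems(2) card_S
        by (simp add: sum_entry_at_prod_pairs[OF adm' no_pole] entry_eq_entry_at[OF q_m])
      also have "\<dots> = prod_pairs entry S"
        using prod_pairs_remove_Min[OF psubset.hyps m(1) _ entry_skew] psubset.hyps
        by (simp add: S'_def m_def)
      finally show ?thesis .
    qed simp
  qed
qed

end

section \<open>The Pfaffians \<open>\<Lambda>\<^sup>I\<close>\<close>

text \<open>For odd \<open>r\<close> the column \<open>r + 1\<close> is the row of the point \<open>(-1 : \<beta>)\<close>.\<close>

definition schur_matrix :: "'a::field \<Rightarrow> (nat \<Rightarrow> 'a) \<Rightarrow> nat \<Rightarrow> nat \<Rightarrow> nat \<Rightarrow> 'a" where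
  "schur_matrix \<beta> t r i j =
     (if j \<le> r then (t j - t i) / (t i + t j + \<beta> * t i * t j) else 1 + \<beta> * t i)"

lemma prod_pairs_atLeastAtMost: "prod_pairs A {1..r} = (\<Prod>(i, j)\<in>Delta r. A i j)"
proof -
  have "{(i, j). i \<in> {1..r} \<and> j \<in> {1..r} \<and> i < j} = Delta r"
    unfolding Delta_def by auto
  then show ?thesis
    unfolding prod_pairs_def by simp
qed

lemma pfaffian_schur_matrix:
  fixes \<beta> :: "'a::field_char_0"
  assumes t_nz: "\<And>i. 1 \<le> i \<Longrightarrow> i \<le> r \<Longrightarrow> t i \<noteq> 0"
    and u_nz: "\<And>i. 1 \<le> i \<Longrightarrow> i \<le> r \<Longrightarrow> 1 + \<beta> * t i \<noteq> 0"
    and den_nz: "\<And>i j. 1 \<le> i \<Longrightarrow> i < j \<Longrightarrow> j \<le> r \<Longrightarrow> t i + t j + \<beta> * t i * t j \<noteq> 0"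
  shows "pfaffian (rprime r) (schur_matrix \<beta> t r) =
    (\<Prod>(i, j)\<in>Delta r. (t j - t i) / (t i + t j + \<beta> * t i * t j))
      * (\<Prod>i\<in>{1..r}. (1 + \<beta> * t i) ^ (rprime r - r))"
proof -
  define n where "n = rprime r"
  define p where "p i = (if i \<le> r then t i else -1)" for i
  define q where "q i = (if i \<le> r then 1 else \<beta>)" for i
  interpret projective_points \<beta> p q .
  have n: "n = r \<or> (odd r \<and> n = Suc r)" "even n" "r \<le> n"
    unfolding n_def rprime_def by auto
  have entry_eq: "entry i j = schur_matrix \<beta> t r i j" if "i \<le> r" "j \<le> n" for i j
    using that n unfolding entry_def den_def p_def q_def schur_matrix_def
    by (auto simp: algebra_simps)
  have "admissible {1..n}"
    unfolding admissible_def
  proof (intro conjI)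
    show "\<forall>k\<in>{1..n}. p k \<noteq> 0"
      using t_nz by (simp add: p_def)
    have "den k l \<noteq> 0" if "k < l" "k \<in> {1..n}" "l \<in> {1..n}" for k l
      using that n den_nz[of k l] unfolding den_def p_def q_def by (auto simp: algebra_simps)
    then show "\<forall>k\<in>{1..n}. \<forall>l\<in>{1..n}. k \<noteq> l \<longrightarrow> den k l \<noteq> 0"
      by (metis den_commute linorder_neqE_nat)
    show "\<exists>\<xi>. \<forall>k\<in>{1..n} - {\<xi>}. q k \<noteq> 0 \<and> w k \<noteq> 0"
      using n u_nz by (intro exI[of _ "Suc r"]) (auto simp: q_def p_def w_def)
  qed simp
  then have "pf_set entry {1..n} = prod_pairs entry {1..n}"
    using n by (intro pf_set_entry_eq_prod_pairs) (auto simp: q_def)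
  moreover have "pf_set entry {1..n} = pfaffian n (schur_matrix \<beta> t r)"
    unfolding pfaffian_eq_pf_set using n by (intro pf_set_cong) (auto simp: entry_eq)
  moreover have "prod_pairs entry {1..r} = (\<Prod>(i, j)\<in>Delta r. (t j - t i) / (t i + t j + \<beta> * t i * t j))"
    unfolding prod_pairs_atLeastAtMost
    using n(3) by (intro prod.cong) (auto simp: Delta_def entry_eq schur_matrix_def)
  moreover have "prod_pairs entry {1..Suc r} = prod_pairs entry {1..r} * (\<Prod>i\<in>{1..r}. 1 + \<beta> * t i)"
  proof -
    have "entry j (Suc r) = 1 + \<beta> * t j" if "j \<le> r" for j
      using that unfolding entry_def den_def p_def q_def by (simp add: algebra_simps)
    moreover have "{1..Suc r} - {Suc r} = {1..r}"
      by auto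
    ultimately show ?thesis
      using prod_pairs_remove_Max[where A = entry, OF _ _ _ entry_skew, of "{1..Suc r}" "Suc r"]
      by (simp add: mult.commute)
  qed
  ultimately show ?thesis
    using n by (auto simp: n_def)
qed

lemma one_minus_div_tbar:
  fixes \<beta> :: "'a::field"
  assumes "b \<noteq> 0" "1 + \<beta> * b \<noteq> 0"
  shows "1 - a / tbar \<beta> b = (a + b + \<beta> * a * b) / b"
  using assms unfolding tbar_def by (simp add: field_simps)

lemma tbar_ratio:
  fixes \<beta> :: "'a::field"
  assumes "b \<noteq> 0" "1 + \<beta> * a \<noteq> 0" "1 + \<beta> * b \<noteq> 0" "a + b + \<beta> * a * b \<noteq> 0"
  shows "1 - tbar \<beta> a / tbar \<beta> b
    = (1 - a / tbar \<beta> b) * ((b - a) / (a + b + \<beta> * a * b)) / (1 + \<beta> * a)"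
proof -
  have "b * (1 + \<beta> * a) \<noteq> 0"
    using assms by simp
  then have "1 - tbar \<beta> a / tbar \<beta> b = (b - a) / b / (1 + \<beta> * a)"
    using assms unfolding tbar_def by (simp add: field_simps)
  moreover have "(a + b + \<beta> * a * b) / b * ((b - a) / (a + b + \<beta> * a * b)) = (b - a) / b"
    using assms(4) by simp
  ultimately show ?thesis
    unfolding one_minus_div_tbar[OF assms(1,3)] by simp
qed

definition row_scale :: "'a::field \<Rightarrow> (nat \<Rightarrow> 'a) \<Rightarrow> (nat \<Rightarrow> nat) \<Rightarrow> nat \<Rightarrow> (nat \<times> nat) set
    \<Rightarrow> nat \<Rightarrow> 'a" where
  "row_scale \<beta> t lam r I i = (if i \<le> r
     then t i powi (int (lam i) + d_I I i) * (1 + \<beta> * t i) powi (int (c_I I i) + int i - int (rprime r))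
     else 1)"

lemma LambdaI_eq_scaled_schur_matrix:
  fixes \<beta> :: "'a::field"
  assumes "1 \<le> i" "i < j" "j \<le> rprime r"
    and t_nz: "\<And>i. 1 \<le> i \<Longrightarrow> i \<le> r \<Longrightarrow> t i \<noteq> 0"
    and u_nz: "\<And>i. 1 \<le> i \<Longrightarrow> i \<le> r \<Longrightarrow> 1 + \<beta> * t i \<noteq> 0"
    and den_nz: "\<And>i j. 1 \<le> i \<Longrightarrow> i < j \<Longrightarrow> j \<le> r \<Longrightarrow> t i + t j + \<beta> * t i * t j \<noteq> 0"
  shows "LambdaI \<beta> t lam r I i j
    = row_scale \<beta> t lam r I i * row_scale \<beta> t lam r I j * schur_matrix \<beta> t r i j"
proof -
  define u where "u = 1 + \<beta> * t i"
  define e where "e = int (c_I I i) + int i - int (rprime r)"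
  have i: "i \<le> r" "u \<noteq> 0"
    using assms(1-3) u_nz[of i] by (auto simp: rprime_def u_def split: if_splits)
  have "e + 1 = - (int (rprime r) - int i - int (c_I I i) - 1)"
    by (simp add: e_def)
  then have "1 / u powi (int (rprime r) - int i - int (c_I I i) - 1) = u powi (e + 1)"
    by (simp only: power_int_minus divide_inverse mult_1_left)
  then have e: "1 / u powi (int (rprime r) - int i - int (c_I I i) - 1) = u powi e * u"
    using i(2) by (simp add: power_int_add)
  show ?thesis
  proof (cases "j \<le> r")
    case True
    have nz: "t j \<noteq> 0" "1 + \<beta> * t j \<noteq> 0" "t i + t j + \<beta> * t i * t j \<noteq> 0"
      using assms True by auto
    then have "1 - t i / tbar \<beta> (t j) \<noteq> 0"
      by (simp add: one_minus_div_tbar)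
    then have "(1 - tbar \<beta> (t i) / tbar \<beta> (t j)) / (1 - t i / tbar \<beta> (t j))
        = (t j - t i) / (t i + t j + \<beta> * t i * t j) / u"
      using tbar_ratio[where a = "t i" and b = "t j", OF nz(1) _ nz(2,3)] i(2)
      by (simp add: u_def)
    moreover have ej: "int (c_I I j) - (int (rprime r) - int j) = int (c_I I j) + int j - int (rprime r)"
      by simp
    ultimately show ?thesis
      using True e i
      by (simp add: ej LambdaI_def F2_def row_scale_def schur_matrix_def u_def[symmetric] e_def[symmetric]
          power_int_minus flip: power_int_minus_divide)
  next
    case False
    then show ?thesis
      using i e by (simp add: LambdaI_def F1_def row_scale_def schur_matrix_def u_def[symmetric]
          e_def[symmetric])
  qed
qed

lemma pfaffian_LambdaI:
  fixes \<beta> :: "'a::field_char_0"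
  assumes t_nz: "\<And>i. 1 \<le> i \<Longrightarrow> i \<le> r \<Longrightarrow> t i \<noteq> 0"
    and u_nz: "\<And>i. 1 \<le> i \<Longrightarrow> i \<le> r \<Longrightarrow> 1 + \<beta> * t i \<noteq> 0"
    and den_nz: "\<And>i j. 1 \<le> i \<Longrightarrow> i < j \<Longrightarrow> j \<le> r \<Longrightarrow> t i + t j + \<beta> * t i * t j \<noteq> 0"
  shows "pfaffian (rprime r) (LambdaI \<beta> t lam r I) =
    (\<Prod>i\<in>{1..r}. row_scale \<beta> t lam r I i)
      * (\<Prod>(i, j)\<in>Delta r. (t j - t i) / (t i + t j + \<beta> * t i * t j))
      * (\<Prod>i\<in>{1..r}. (1 + \<beta> * t i) ^ (rprime r - r))"
proof -
  let ?s = "row_scale \<beta> t lam r I"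
  have "pfaffian (rprime r) (LambdaI \<beta> t lam r I)
      = pf_set (\<lambda>i j. ?s i * ?s j * schur_matrix \<beta> t r i j) {1..rprime r}"
    unfolding pfaffian_eq_pf_set
    using LambdaI_eq_scaled_schur_matrix[OF _ _ _ assms] by (intro pf_set_cong) auto
  also have "\<dots> = (\<Prod>i\<in>{1..rprime r}. ?s i) * pfaffian (rprime r) (schur_matrix \<beta> t r)"
    by (simp add: pf_set_scale pfaffian_eq_pf_set)
  also have "(\<Prod>i\<in>{1..rprime r}. ?s i) = (\<Prod>i\<in>{1..r}. ?s i)"
    by (intro prod.mono_neutral_right) (auto simp: row_scale_def rprime_def)
  finally show ?thesis
    by (simp only: pfaffian_schur_matrix[OF assms] mult.assoc)
qed

section \<open>Expansion of the left-hand side\<close>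

lemma prod_fst_eq_prod_power_card:
  assumes "finite I" "finite X" "fst ` I \<subseteq> X"
  shows "(\<Prod>(i, j)\<in>I. f i) = (\<Prod>i\<in>X. f i ^ card {j. (i, j) \<in> I})"
proof -
  have fibres: "finite {j. (i, j) \<in> I}" for i
    using assms(1) by (rule finite_subset[rotated, OF finite_imageI[of _ snd]]) force
  have "I = Sigma X (\<lambda>i. {j. (i, j) \<in> I})"
    using assms(3) by force
  then have "(\<Prod>(i, j)\<in>I. f i) = (\<Prod>(i, j)\<in>Sigma X (\<lambda>i. {j. (i, j) \<in> I}). f i)"
    by simp
  also have "\<dots> = (\<Prod>i\<in>X. \<Prod>j\<in>{j. (i, j) \<in> I}. f i)"
    using assms(2) fibres by (intro prod.Sigma[symmetric]) auto
  finally show ?thesis by simp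
qed

lemma prod_snd_eq_prod_power_card:
  assumes "finite I" "finite X" "snd ` I \<subseteq> X"
  shows "(\<Prod>(i, j)\<in>I. f j) = (\<Prod>j\<in>X. f j ^ card {i. (i, j) \<in> I})"
proof -
  have "(\<Prod>(i, j)\<in>I. f j) = (\<Prod>(j, i)\<in>prod.swap ` I. f j)"
    by (simp add: prod.reindex case_prod_beta)
  also have "\<dots> = (\<Prod>j\<in>X. f j ^ card {i. (j, i) \<in> prod.swap ` I})"
    using assms by (intro prod_fst_eq_prod_power_card) force+
  moreover have "{i. (j, i) \<in> prod.swap ` I} = {i. (i, j) \<in> I}" for j
    by force
  ultimately show ?thesis
    by simp
qed

lemma card_Delta_row: "1 \<le> i \<Longrightarrow> card {j. (i, j) \<in> Delta r} = r - i"
proof -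
  assume "1 \<le> i"
  then have "{j. (i, j) \<in> Delta r} = {Suc i..r}" unfolding Delta_def by auto
  then show ?thesis by simp
qed

lemma finite_Delta: "finite (Delta r)"
  by (rule finite_subset[of _ "{1..r} \<times> {1..r}"]) (auto simp: Delta_def)

lemma prod_Delta_one_minus_tbar:
  fixes \<beta> :: "'a::field"
  assumes t_nz: "\<And>i. 1 \<le> i \<Longrightarrow> i \<le> r \<Longrightarrow> t i \<noteq> 0"
    and u_nz: "\<And>i. 1 \<le> i \<Longrightarrow> i \<le> r \<Longrightarrow> 1 + \<beta> * t i \<noteq> 0"
    and den_nz: "\<And>i j. 1 \<le> i \<Longrightarrow> i < j \<Longrightarrow> j \<le> r \<Longrightarrow> t i + t j + \<beta> * t i * t j \<noteq> 0"
  shows "(\<Prod>(i, j)\<in>Delta r. 1 - tbar \<beta> (t i) / tbar \<beta> (t j)) =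
    (\<Prod>(i, j)\<in>Delta r. 1 - t i / tbar \<beta> (t j))
      * (\<Prod>(i, j)\<in>Delta r. (t j - t i) / (t i + t j + \<beta> * t i * t j))
      / (\<Prod>i\<in>{1..r}. (1 + \<beta> * t i) ^ (r - i))"
proof -
  have "(\<Prod>(i, j)\<in>Delta r. 1 - tbar \<beta> (t i) / tbar \<beta> (t j)) =
      (\<Prod>(i, j)\<in>Delta r. (1 - t i / tbar \<beta> (t j)) * ((t j - t i) / (t i + t j + \<beta> * t i * t j))
         / (1 + \<beta> * t i))"
    using assms by (intro prod.cong refl) (auto simp: Delta_def tbar_ratio)
  also have "\<dots> = (\<Prod>(i, j)\<in>Delta r. 1 - t i / tbar \<beta> (t j))
      * (\<Prod>(i, j)\<in>Delta r. (t j - t i) / (t i + t j + \<beta> * t i * t j))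
      / (\<Prod>(i, j)\<in>Delta r. 1 + \<beta> * t i)"
    by (simp add: case_prod_beta prod.distrib prod_dividef)
  also have "(\<Prod>(i, j)\<in>Delta r. 1 + \<beta> * t i)
      = (\<Prod>i\<in>{1..r}. (1 + \<beta> * t i) ^ card {j. (i, j) \<in> Delta r})"
    by (rule prod_fst_eq_prod_power_card[OF finite_Delta]) (auto simp: Delta_def)
  also have "\<dots> = (\<Prod>i\<in>{1..r}. (1 + \<beta> * t i) ^ (r - i))"
    by (intro prod.cong refl) (simp add: card_Delta_row)
  finally show ?thesis .
qed

lemma prod_one_minus_div_tbar_expand:
  fixes \<beta> :: "'a::field"
  assumes "D \<subseteq> Delta r"
    and t_nz: "\<And>i. 1 \<le> i \<Longrightarrow> i \<le> r \<Longrightarrow> t i \<noteq> 0"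
    and u_nz: "\<And>i. 1 \<le> i \<Longrightarrow> i \<le> r \<Longrightarrow> 1 + \<beta> * t i \<noteq> 0"
  shows "(\<Prod>(i, j)\<in>D. 1 - t i / tbar \<beta> (t j)) =
    (\<Sum>I\<in>Pow D. \<Prod>i\<in>{1..r}. t i ^ a_I I i * ((1 + \<beta> * t i) / t i) ^ c_I I i)"
proof -
  define v where "v j = (1 + \<beta> * t j) / t j" for j
  have fin: "finite D"
    using assms(1) finite_Delta by (rule finite_subset)
  have "(\<Prod>(i, j)\<in>D. 1 - t i / tbar \<beta> (t j)) = (\<Prod>(i, j)\<in>D. t i * v j + 1)"
    using assms by (intro prod.cong refl) (auto simp: Delta_def tbar_def v_def)
  also have "\<dots> = (\<Sum>I\<in>Pow D. \<Prod>(i, j)\<in>I. t i * v j)"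
    using prod_add[OF fin, of "\<lambda>(i, j). t i * v j" "\<lambda>_. 1"] by (simp add: case_prod_beta)
  also have "\<dots> = (\<Sum>I\<in>Pow D. \<Prod>i\<in>{1..r}. t i ^ a_I I i * v i ^ c_I I i)"
  proof (intro sum.cong refl)
    fix I assume "I \<in> Pow D"
    then have I: "finite I" "fst ` I \<subseteq> {1..r}" "snd ` I \<subseteq> {1..r}"
      using assms(1) fin by (auto simp: Delta_def intro: finite_subset)
    have "(\<Prod>(i, j)\<in>I. t i * v j) = (\<Prod>(i, j)\<in>I. t i) * (\<Prod>(i, j)\<in>I. v j)"
      by (simp add: case_prod_beta prod.distrib)
    then show "(\<Prod>(i, j)\<in>I. t i * v j) = (\<Prod>i\<in>{1..r}. t i ^ a_I I i * v i ^ c_I I i)"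
      unfolding prod_fst_eq_prod_power_card[OF I(1) finite_atLeastAtMost I(2)]
        prod_snd_eq_prod_power_card[OF I(1) finite_atLeastAtMost I(3)]
      by (simp add: a_I_def c_I_def prod.distrib)
  qed
  finally show ?thesis
    by (simp only: v_def)
qed

lemma monomial_eq_powi:
  fixes x y :: "'a::field"
  assumes "x \<noteq> 0" "y \<noteq> 0" "i \<le> r" "r \<le> n"
  shows "x ^ l * (x ^ a * (y / x) ^ c) / y ^ (r - i)
    = x powi (int l + (int a - int c)) * y powi (int c + int i - int n) * y ^ (n - r)"
proof -
  have "x powi (int l + (int a - int c)) = x ^ l * x ^ a / x ^ c"
    using assms(1) by (simp add: power_int_add power_int_diff)
  moreover have "y powi (int c + int i - int n) * y ^ (n - r) = y ^ c / y ^ (r - i)"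
  proof -
    have "y powi (int c + int i - int n) * y ^ (n - r) = y powi (int c + int i - int n + int (n - r))"
      using assms(2) by (simp add: power_int_add)
    also have "int c + int i - int n + int (n - r) = int c - int (r - i)"
      using assms(3,4) by simp
    finally show ?thesis
      using assms(2) by (simp add: power_int_diff)
  qed
  ultimately show ?thesis
    by (simp add: power_divide mult.assoc)
qed

lemma prod_monomials_eq_prod_row_scale:
  fixes \<beta> :: "'a::field"
  assumes t_nz: "\<And>i. 1 \<le> i \<Longrightarrow> i \<le> r \<Longrightarrow> t i \<noteq> 0"
    and u_nz: "\<And>i. 1 \<le> i \<Longrightarrow> i \<le> r \<Longrightarrow> 1 + \<beta> * t i \<noteq> 0"
  shows "(\<Prod>i\<in>{1..r}. t i ^ lam i) * (\<Prod>i\<in>{1..r}. t i ^ a_I I i * ((1 + \<beta> * t i) / t i) ^ c_I I i)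
      / (\<Prod>i\<in>{1..r}. (1 + \<beta> * t i) ^ (r - i))
    = (\<Prod>i\<in>{1..r}. row_scale \<beta> t lam r I i) * (\<Prod>i\<in>{1..r}. (1 + \<beta> * t i) ^ (rprime r - r))"
proof -
  have "r \<le> rprime r" by (simp add: rprime_def)
  have "(\<Prod>i\<in>{1..r}. t i ^ lam i) * (\<Prod>i\<in>{1..r}. t i ^ a_I I i * ((1 + \<beta> * t i) / t i) ^ c_I I i)
      / (\<Prod>i\<in>{1..r}. (1 + \<beta> * t i) ^ (r - i))
    = (\<Prod>i\<in>{1..r}. t i ^ lam i * (t i ^ a_I I i * ((1 + \<beta> * t i) / t i) ^ c_I I i)
        / (1 + \<beta> * t i) ^ (r - i))"
    by (simp add: prod_dividef prod.distrib)
  also have "\<dots> = (\<Prod>i\<in>{1..r}. row_scale \<beta> t lam r I i * (1 + \<beta> * t i) ^ (rprime r - r))"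
    using \<open>r \<le> rprime r\<close> assms
    by (intro prod.cong refl) (simp add: monomial_eq_powi row_scale_def d_I_def)
  finally show ?thesis
    by (simp add: prod.distrib)
qed

lemma prod_one_minus_div_tbar_nonzero:
  assumes "C \<subseteq> Delta r"
    and B_nz: "\<And>i j. 1 \<le> i \<Longrightarrow> i < j \<Longrightarrow> j \<le> r \<Longrightarrow> 1 - t i / tbar \<beta> (t j) \<noteq> 0"
  shows "(\<Prod>(i, j)\<in>C. 1 - t i / tbar \<beta> (t j)) \<noteq> (0::'a::field)"
proof -
  have "finite C"
    using assms(1) finite_Delta by (rule finite_subset)
  moreover have "\<forall>x\<in>C. (case x of (i, j) \<Rightarrow> 1 - t i / tbar \<beta> (t j)) \<noteq> 0"
  proof
    fix x assume "x \<in> C"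
    then obtain i j where "x = (i, j)" "1 \<le> i" "i < j" "j \<le> r"
      using assms(1) by (auto simp: Delta_def)
    then show "(case x of (i, j) \<Rightarrow> 1 - t i / tbar \<beta> (t j)) \<noteq> 0"
      using B_nz[of i j] by simp
  qed
  ultimately show ?thesis
    by (simp only: prod_zero_iff) blast
qed

lemma monomial_term_eq_pfaffian_LambdaI:
  fixes \<beta> :: "'a::field_char_0"
  assumes t_nz: "\<And>i. 1 \<le> i \<Longrightarrow> i \<le> r \<Longrightarrow> t i \<noteq> 0"
    and u_nz: "\<And>i. 1 \<le> i \<Longrightarrow> i \<le> r \<Longrightarrow> 1 + \<beta> * t i \<noteq> 0"
    and den_nz: "\<And>i j. 1 \<le> i \<Longrightarrow> i < j \<Longrightarrow> j \<le> r \<Longrightarrow> t i + t j + \<beta> * t i * t j \<noteq> 0"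
  shows "(\<Prod>i\<in>{1..r}. t i ^ lam i)
      * (\<Prod>i\<in>{1..r}. t i ^ a_I I i * ((1 + \<beta> * t i) / t i) ^ c_I I i)
      * (\<Prod>(i, j)\<in>Delta r. (t j - t i) / (t i + t j + \<beta> * t i * t j))
      / (\<Prod>i\<in>{1..r}. (1 + \<beta> * t i) ^ (r - i))
    = pfaffian (rprime r) (LambdaI \<beta> t lam r I)"
    (is "?T * ?mono * ?M / ?U = _")
proof -
  let ?S = "\<Prod>i\<in>{1..r}. row_scale \<beta> t lam r I i"
  let ?E = "\<Prod>i\<in>{1..r}. (1 + \<beta> * t i) ^ (rprime r - r)"
  have "?T * ?mono * ?M / ?U = ?T * ?mono / ?U * ?M"
    by (rule times_divide_eq_left[symmetric])
  also have "?T * ?mono / ?U = ?S * ?E"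
    by (rule prod_monomials_eq_prod_row_scale[OF t_nz u_nz])
  also have "?S * ?E * ?M = ?S * ?M * ?E"
    by (simp only: ac_simps)
  also have "\<dots> = pfaffian (rprime r) (LambdaI \<beta> t lam r I)"
    by (rule pfaffian_LambdaI[OF t_nz u_nz den_nz, symmetric])
  finally show ?thesis .
qed

lemma sum_pfaffian_LambdaI:
  fixes \<beta> :: "'a::field_char_0"
  assumes "C \<subseteq> Delta r"
    and t_nz: "\<And>i. 1 \<le> i \<Longrightarrow> i \<le> r \<Longrightarrow> t i \<noteq> 0"
    and u_nz: "\<And>i. 1 \<le> i \<Longrightarrow> i \<le> r \<Longrightarrow> 1 + \<beta> * t i \<noteq> 0"
    and B_nz: "\<And>i j. 1 \<le> i \<Longrightarrow> i < j \<Longrightarrow> j \<le> r \<Longrightarrow> 1 - t i / tbar \<beta> (t j) \<noteq> 0"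
  shows "(\<Prod>i\<in>{1..r}. t i ^ lam i) * (\<Prod>(i, j)\<in>Delta r. 1 - tbar \<beta> (t i) / tbar \<beta> (t j))
      / (\<Prod>(i, j)\<in>C. 1 - t i / tbar \<beta> (t j))
    = (\<Sum>I\<in>Pow (Delta r - C). pfaffian (rprime r) (LambdaI \<beta> t lam r I))"
proof -
  define B where "B X = (\<Prod>(i, j)\<in>X. 1 - t i / tbar \<beta> (t j))" for X
  define T where "T = (\<Prod>i\<in>{1..r}. t i ^ lam i)"
  define M where "M = (\<Prod>(i, j)\<in>Delta r. (t j - t i) / (t i + t j + \<beta> * t i * t j))"
  define U where "U = (\<Prod>i\<in>{1..r}. (1 + \<beta> * t i) ^ (r - i))"
  define mono where "mono I = (\<Prod>i\<in>{1..r}. t i ^ a_I I i * ((1 + \<beta> * t i) / t i) ^ c_I I i)" for I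
  have den_nz: "t i + t j + \<beta> * t i * t j \<noteq> 0" if "1 \<le> i" "i < j" "j \<le> r" for i j
    using that B_nz[OF that] t_nz[of j] u_nz[of j] by (simp add: one_minus_div_tbar)
  have "B C \<noteq> 0"
    unfolding B_def using assms(1) B_nz by (rule prod_one_minus_div_tbar_nonzero)
  moreover have "B (Delta r) = B (Delta r - C) * B C"
    unfolding B_def using assms(1) finite_Delta by (rule prod.subset_diff)
  moreover have "(\<Prod>(i, j)\<in>Delta r. 1 - tbar \<beta> (t i) / tbar \<beta> (t j)) = B (Delta r) * M / U"
    unfolding B_def M_def U_def by (rule prod_Delta_one_minus_tbar[OF t_nz u_nz den_nz])
  ultimately have "T * (\<Prod>(i, j)\<in>Delta r. 1 - tbar \<beta> (t i) / tbar \<beta> (t j)) / B C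
      = T * B (Delta r - C) * M / U"
    by simp
  also have "B (Delta r - C) = (\<Sum>I\<in>Pow (Delta r - C). mono I)"
    unfolding B_def mono_def by (rule prod_one_minus_div_tbar_expand[OF _ t_nz u_nz]) auto
  also have "T * (\<Sum>I\<in>Pow (Delta r - C). mono I) * M / U = (\<Sum>I\<in>Pow (Delta r - C). T * mono I * M / U)"
    by (simp add: sum_distrib_left sum_distrib_right sum_divide_distrib)
  also have "\<dots> = (\<Sum>I\<in>Pow (Delta r - C). pfaffian (rprime r) (LambdaI \<beta> t lam r I))"
    unfolding T_def mono_def M_def U_def
    by (intro sum.cong refl monomial_term_eq_pfaffian_LambdaI[OF t_nz u_nz den_nz])
  finally show ?thesis
    unfolding T_def B_def .
qed

text \<open>The expansion holds for every \<open>C \<subseteq> \<Delta>\<^sub>r\<close>.\<close>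

theorem lemma6p1:
  fixes k r :: nat and lam :: "nat \<Rightarrow> nat" and \<beta> :: "'a::field_char_0" and t :: "nat \<Rightarrow> 'a"
  assumes "is_partition_of_length lam r"
    and "k_strict k lam"
    and "\<forall>i. 1 \<le> i \<and> i \<le> r \<longrightarrow> t i \<noteq> 0"
    and "\<forall>i. 1 \<le> i \<and> i \<le> r \<longrightarrow> 1 + \<beta> * t i \<noteq> 0"
    and "\<forall>i j. 1 \<le> i \<and> i < j \<and> j \<le> r \<longrightarrow> 1 - t i / tbar \<beta> (t j) \<noteq> 0"
  shows "(\<Prod>i\<in>{1..r}. t i ^ lam i)
           * (\<Prod>(i, j)\<in>Delta r. 1 - tbar \<beta> (t i) / tbar \<beta> (t j))
           / (\<Prod>(i, j)\<in>Cset k lam r. 1 - t i / tbar \<beta> (t j))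
         = (\<Sum>I\<in>Pow (Dset k lam r). pfaffian (rprime r) (LambdaI \<beta> t lam r I))"
proof -
  have "Cset k lam r \<subseteq> Delta r"
    by (auto simp: Cset_def)
  then show ?thesis
    unfolding Dset_def using assms(3-5) by (intro sum_pfaffian_LambdaI) auto
qed

end
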